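(* Assume the setting described in the context (hypotheses on $f,v,\eta$, the mesh condition $h<1/C$ and the CFL condition). If $\rho^o_j\ge 0$ for all $j\in\mathbb{Z}$, then the approximate solution constructed by the scheme satisfies $\|\rho^n\|_{L^1}\le\|\rho^o\|_{L^1}$ for all $n\in\mathbb{N}$.
   Context: Let $C>0$ and let $f\in C^2(\mathbb{R}^+\times\mathbb{R}\times\mathbb{R};\mathbb{R})$ satisfy $\sup_{t,x,\rho}|\partial_\rho f(t,x,\rho)|<+\infty$, $\sup_{t,x}|\partial_x f(t,x,\rho)|< C|\rho|$ and $\sup_{t,x}|\partial^2_{xx} f(t,x,\rho)|< C|\rho|$ for all $\rho$, and $f(t,x,0)=0$ for all $t,x$. Let $v\in (C^2\cap W^{1,\infty})(\mathbb{R};\mathbb{R})$ and $\eta\in (C^2\cap W^{2,\infty})(\mathbb{R};\mathbb{R})$. These are the data of the nonlocal conservation law $\partial_t\rho+\partial_x\big(f(t,x,\rho)\,v(\rho*\eta)\big)=0$, $\rho(0,x)=\rho^o(x)$, with $\rho^o\in L^\infty(\mathbb{R})$. Numerical scheme: fix a space step $h>0$ and time step $\tau>0$, set $\lambda=\tau/h$, $x_j=jh$, $x_{j+1/2}=(j+\tfrac12)h$, $t^n=n\tau$. Assume $h<1/C$ and the CFL condition $\lambda\,(1+2\|\partial_\rho f\|_{L^\infty})\|v\|_{L^\infty}\le 1/6$. Set $\rho^o_j=\frac1h\int_{x_{j-1/2}}^{x_{j+1/2}}\rho^o(x)\,dx$ and $\rho^{n+1}_j=\rho^n_j-\lambda\big(\mathbf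 f^n_{j+1/2}(\rho^n_j,\rho^n_{j+1})-\mathbf f^n_{j-1/2}(\rho^n_{j-1},\rho^n_j)\big)$, where $\mathbf f^n_{j+1/2}(\rho_1,\rho_2)=\frac{f(t^n,x_{j+1/2},\rho_1)+f(t^n,x_{j+1/2},\rho_2)}{2}\,v(c^n_{j+1/2})-\frac{1}{6\lambda}(\rho_2-\rho_1)$, $c^n_{j+1/2}=\sum_{k\in\mathbb{Z}} h\,\rho^n_{k+1/2}\,\eta_{j+1/2-k}$, with $\rho^n_{k+1/2}$ a convex combination of $\rho^n_k$ and $\rho^n_{k+1}$, and $\eta_{m+1/2}=\frac1h\int_{x_m}^{x_{m+1}}\eta(x)\,dx$. Discrete norms: $\|\rho^n\|_{L^1}=\sum_{j\in\mathbb{Z}}h|\rho^n_j|$ (and $\|\rho^o\|_{L^1}$ is the $L^1$ norm of the initial datum). *)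

theory Defs
  imports "HOL-Analysis.Analysis"
begin

definition C2_on :: "'a::real_normed_vector set \<Rightarrow> ('a \<Rightarrow> real) \<Rightarrow> bool" where
  "C2_on S g \<longleftrightarrow> (\<exists>D1 D2.
      (\<forall>x\<in>S. (g has_derivative blinfun_apply (D1 x)) (at x within S)) \<and>
      (\<forall>x\<in>S. (D1 has_derivative blinfun_apply (D2 x)) (at x within S)) \<and>
      continuous_on S D2)"

definition d_rho :: "(real \<Rightarrow> real \<Rightarrow> real \<Rightarrow> real) \<Rightarrow> real \<Rightarrow> real \<Rightarrow> real \<Rightarrow> real" where
  "d_rho f t x r = deriv (\<lambda>s. f t x s) r"

definition d_x :: "(real \<Rightarrow> real \<Rightarrow> real \<Rightarrow> real) \<Rightarrow> real \<Rightarrow> real \<Rightarrow> real \<Rightarrow> real" where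
  "d_x f t x r = deriv (\<lambda>y. f t y r) x"

definition d_xx :: "(real \<Rightarrow> real \<Rightarrow> real \<Rightarrow> real) \<Rightarrow> real \<Rightarrow> real \<Rightarrow> real \<Rightarrow> real" where
  "d_xx f t x r = deriv (\<lambda>y. deriv (\<lambda>z. f t z r) y) x"

text \<open>Numerical flux  f^n_{j+1/2}(r1,r2); argument c is c^n_{j+1/2}, lam = tau/h.\<close>
definition num_flux ::
  "(real \<Rightarrow> real \<Rightarrow> real \<Rightarrow> real) \<Rightarrow> (real \<Rightarrow> real) \<Rightarrow> real \<Rightarrow> real \<Rightarrow> nat \<Rightarrow> int \<Rightarrow> real
     \<Rightarrow> real \<Rightarrow> real \<Rightarrow> real" where
  "num_flux f v h tau n j c r1 r2 =
     (f (real n * tau) ((real_of_int j + 1/2) * h) r1 + f (real n * tau) ((real_of_int j + 1/2) * h) r2) / 2 * v c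
     - (r2 - r1) / (6 * (tau / h))"

end

theory Submission
  imports Defs
begin

text \<open>Since f(t,x,0) = 0 and \<partial>f/\<partial>\<rho> is bounded by L, we may write f(t,x,\<rho>) = g(t,x,\<rho>) \<rho> with |g| \<le> L.
  One step of the scheme then reads \<rho>'(j) = a(j) \<rho>(j) + b(j) \<rho>(j+1) + c(j) \<rho>(j-1) with
  a(k) + b(k-1) + c(k+1) = 1, and the CFL condition gives \<lambda> |g v| \<le> 1/12, which makes all
  three coefficients nonnegative. Hence nonnegativity propagates and the discrete mass is conserved
  exactly, while the initial mass is at most the L1 norm of \<rho>o because the cell integrals of
  |\<rho>o| add up to its integral.\<close>

lemma C2_on_has_field_derivative_d_rho:
  fixes f :: "real \<Rightarrow> real \<Rightarrow> real \<Rightarrow> real"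
  assumes "C2_on ({0..} \<times> UNIV \<times> UNIV) (\<lambda>(t, x, r). f t x r)" and "t \<ge> 0"
  shows "((\<lambda>s. f t x s) has_field_derivative d_rho f t x s) (at s)"
proof -
  let ?S = "({0..} \<times> UNIV \<times> UNIV) :: (real \<times> real \<times> real) set"
  obtain D :: "real \<times> real \<times> real \<Rightarrow> (real \<times> real \<times> real) \<Rightarrow>\<^sub>L real" where
    D: "\<And>p. p \<in> ?S \<Longrightarrow> ((\<lambda>(t, x, r). f t x r) has_derivative D p) (at p within ?S)"
    using assms(1) unfolding C2_on_def by blast
  have "((\<lambda>s. (t, x, s)) has_derivative (\<lambda>y. (0, 0, y))) (at s)"
    by (auto intro!: derivative_eq_intros)
  from has_derivative_in_compose2[OF D _ _ this]
  have "(\<lambda>s. f t x s) differentiable (at s)"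
    using assms(2) unfolding differentiable_def by auto
  then show ?thesis
    unfolding d_rho_def by (simp add: DERIV_deriv_iff_real_differentiable)
qed

lemma abs_le_of_d_rho_bound:
  fixes f :: "real \<Rightarrow> real \<Rightarrow> real \<Rightarrow> real"
  assumes "C2_on ({0..} \<times> UNIV \<times> UNIV) (\<lambda>(t, x, r). f t x r)" and "t \<ge> 0"
    and "\<And>s. \<bar>d_rho f t x s\<bar> \<le> L" and "f t x 0 = 0"
  shows "\<bar>f t x r\<bar> \<le> L * \<bar>r\<bar>"
proof -
  have "norm (f t x r - f t x 0) \<le> L * norm (r - 0)"
    using C2_on_has_field_derivative_d_rho[OF assms(1,2)] assms(3)
    by (intro field_differentiable_bound[OF convex_UNIV]) (auto simp: has_field_derivative_at_within)
  then show ?thesis using assms(4) by simp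
qed

lemma CFL_flux_coefficient_bound:
  fixes f :: "real \<Rightarrow> real \<Rightarrow> real \<Rightarrow> real" and v :: "real \<Rightarrow> real"
  assumes f_C2: "C2_on ({0..} \<times> UNIV \<times> UNIV) (\<lambda>(t, x, r). f t x r)"
    and f_rho_bdd: "\<exists>L. \<forall>t\<ge>0. \<forall>x r. \<bar>d_rho f t x r\<bar> \<le> L"
    and f_zero: "\<forall>t\<ge>0. \<forall>x. f t x 0 = 0"
    and v_bdd: "\<exists>M. \<forall>u. \<bar>v u\<bar> \<le> M"
    and lam: "lam > 0"
    and CFL: "lam * (1 + 2 * (SUP p \<in> {0::real..} \<times> (UNIV::real set) \<times> (UNIV::real set).
                 \<bar>d_rho f (fst p) (fst (snd p)) (snd (snd p))\<bar>)) * (SUP u. \<bar>v u\<bar>) \<le> 1 / 6"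
    and t: "t \<ge> 0"
  shows "lam * \<bar>f t x s / s * v u\<bar> \<le> 1 / 12"
proof -
  define L where "L = (SUP p \<in> {0::real..} \<times> (UNIV::real set) \<times> (UNIV::real set).
                 \<bar>d_rho f (fst p) (fst (snd p)) (snd (snd p))\<bar>)"
  define V where "V = (SUP u. \<bar>v u\<bar>)"
  have d_rho_le: "\<bar>d_rho f t' y r\<bar> \<le> L" if "t' \<ge> 0" for t' y r
  proof -
    obtain M where "\<forall>t\<ge>0. \<forall>x r. \<bar>d_rho f t x r\<bar> \<le> M" using f_rho_bdd by blast
    then show ?thesis
      unfolding L_def using that
      by (intro cSUP_upper2[where x="(t', y, r)"]) (auto intro!: bdd_aboveI2[where M=M])
  qed
  have v_le: "\<bar>v w\<bar> \<le> V" for w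
  proof -
    obtain M where "\<forall>u. \<bar>v u\<bar> \<le> M" using v_bdd by blast
    then show ?thesis
      unfolding V_def by (intro cSUP_upper2[where x=w]) (auto intro!: bdd_aboveI2[where M=M])
  qed
  have "\<bar>f t x s\<bar> \<le> L * \<bar>s\<bar>"
    using abs_le_of_d_rho_bound[OF f_C2 t d_rho_le[OF t]] f_zero t by blast
  then have "\<bar>f t x s / s\<bar> \<le> L"
    using d_rho_le[OF t, of x s] by (cases "s = 0") (auto simp: abs_divide divide_le_eq)
  then have "lam * \<bar>f t x s / s * v u\<bar> \<le> lam * (L * V)"
    using lam v_le[of u] order.trans[OF abs_ge_zero d_rho_le[OF t]] unfolding abs_mult
    by (intro mult_left_mono mult_mono) auto
  also have "\<dots> \<le> 1 / 12"
  proof -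
    have "lam * V \<ge> 0" using lam v_le[of 0] by simp
    moreover have "lam * (1 + 2 * L) * V = lam * V + 2 * (lam * (L * V))" by (simp add: algebra_simps)
    ultimately show ?thesis using CFL unfolding L_def[symmetric] V_def[symmetric] by linarith
  qed
  finally show ?thesis .
qed

lemma nn_integral_three_point_update:
  fixes r r' a b c :: "int \<Rightarrow> real"
  assumes update: "\<And>j. r' j = a j * r j + b j * r (j + 1) + c j * r (j - 1)"
    and nonneg: "\<And>j. a j \<ge> 0" "\<And>j. b j \<ge> 0" "\<And>j. c j \<ge> 0" "\<And>j. r j \<ge> 0"
    and partition: "\<And>k. a k + b (k - 1) + c (k + 1) = 1"
  shows "(\<integral>\<^sup>+j. ennreal (r' j) \<partial>count_space UNIV) = (\<integral>\<^sup>+j. ennreal (r j) \<partial>count_space UNIV)"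
proof -
  have shift: "(\<integral>\<^sup>+j. g (j + d) \<partial>count_space UNIV) = (\<integral>\<^sup>+j. g j \<partial>count_space UNIV)"
    for g :: "int \<Rightarrow> ennreal" and d :: int
    by (rule nn_integral_bij_count_space) (rule bij_betwI[where g="\<lambda>j. j - d"], auto)
  have "(\<integral>\<^sup>+j. ennreal (r' j) \<partial>count_space UNIV)
      = (\<integral>\<^sup>+j. ennreal (a j * r j) + ennreal (b j * r (j + 1)) + ennreal (c j * r (j - 1))
           \<partial>count_space UNIV)"
    using nonneg by (intro nn_integral_cong) (simp add: update ennreal_plus)
  also have "\<dots> = (\<integral>\<^sup>+j. ennreal (a j * r j) \<partial>count_space UNIV)
      + (\<integral>\<^sup>+j. ennreal (b j * r (j + 1)) \<partial>count_space UNIV)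
      + (\<integral>\<^sup>+j. ennreal (c j * r (j - 1)) \<partial>count_space UNIV)"
    by (simp add: nn_integral_add)
  also have "(\<integral>\<^sup>+j. ennreal (b j * r (j + 1)) \<partial>count_space UNIV)
      = (\<integral>\<^sup>+j. ennreal (b (j - 1) * r j) \<partial>count_space UNIV)"
    using shift[of "\<lambda>j. ennreal (b (j - 1) * r j)" 1] by simp
  also have "(\<integral>\<^sup>+j. ennreal (c j * r (j - 1)) \<partial>count_space UNIV)
      = (\<integral>\<^sup>+j. ennreal (c (j + 1) * r j) \<partial>count_space UNIV)"
    using shift[of "\<lambda>j. ennreal (c (j + 1) * r j)" "-1"] by simp
  also have "(\<integral>\<^sup>+j. ennreal (a j * r j) \<partial>count_space UNIV)
      + (\<integral>\<^sup>+j. ennreal (b (j - 1) * r j) \<partial>count_space UNIV)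
      + (\<integral>\<^sup>+j. ennreal (c (j + 1) * r j) \<partial>count_space UNIV)
      = (\<integral>\<^sup>+j. ennreal ((a j + b (j - 1) + c (j + 1)) * r j) \<partial>count_space UNIV)"
    using nonneg by (simp add: nn_integral_add[symmetric] distrib_right)
  finally show ?thesis by (simp add: partition)
qed

lemma lax_friedrichs_step_three_point:
  fixes r r' :: "int \<Rightarrow> real" and F :: "int \<Rightarrow> real \<Rightarrow> real \<Rightarrow> real" and G :: "int \<Rightarrow> real \<Rightarrow> real"
  assumes step: "\<And>j. r' j = r j - lam * (F j (r j) (r (j + 1)) - F (j - 1) (r (j - 1)) (r j))"
    and flux: "\<And>j p q. F j p q = (G j p * p + G j q * q) / 2 - (q - p) / (6 * lam)"
    and lam: "lam > 0"
    and G_bound: "\<And>j s. lam * \<bar>G j s\<bar> \<le> 1 / 12"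
  obtains a b c where "\<And>j. r' j = a j * r j + b j * r (j + 1) + c j * r (j - 1)"
    and "\<And>j. a j \<ge> 0" "\<And>j. b j \<ge> 0" "\<And>j. c j \<ge> 0"
    and "\<And>k. a k + b (k - 1) + c (k + 1) = 1"
proof
  have "\<bar>lam * G j s\<bar> \<le> 1 / 12" for j s
    using G_bound[of j s] lam by (simp add: abs_mult)
  then have G_range: "- 1 / 12 \<le> lam * G j s \<and> lam * G j s \<le> 1 / 12" for j s
    by (metis abs_le_D1 abs_le_D2 minus_divide_left minus_le_iff)
  show "r' j = (2/3 - lam/2 * (G j (r j) - G (j - 1) (r j))) * r j
      + (1/6 - lam/2 * G j (r (j + 1))) * r (j + 1) + (1/6 + lam/2 * G (j - 1) (r (j - 1))) * r (j - 1)"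
    for j using lam by (simp add: step flux field_simps)
  show "2/3 - lam/2 * (G j (r j) - G (j - 1) (r j)) \<ge> 0" for j
    using G_range[of j "r j"] G_range[of "j - 1" "r j"] by (simp add: algebra_simps)
  show "1/6 - lam/2 * G j (r (j + 1)) \<ge> 0" for j
    using G_range[of j "r (j + 1)"] by simp
  show "1/6 + lam/2 * G (j - 1) (r (j - 1)) \<ge> 0" for j
    using G_range[of "j - 1" "r (j - 1)"] by simp
qed (simp add: algebra_simps)

lemma lax_friedrichs_step_nonneg_mass:
  fixes r r' :: "int \<Rightarrow> real" and F :: "int \<Rightarrow> real \<Rightarrow> real \<Rightarrow> real" and G :: "int \<Rightarrow> real \<Rightarrow> real"
  assumes "\<And>j. r' j = r j - lam * (F j (r j) (r (j + 1)) - F (j - 1) (r (j - 1)) (r j))"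
    and "\<And>j p q. F j p q = (G j p * p + G j q * q) / 2 - (q - p) / (6 * lam)"
    and "lam > 0" and "\<And>j s. lam * \<bar>G j s\<bar> \<le> 1 / 12"
    and r_nonneg: "\<And>j. r j \<ge> 0"
  shows "\<forall>j. r' j \<ge> 0"
    and "(\<integral>\<^sup>+j. ennreal (r' j) \<partial>count_space UNIV) = (\<integral>\<^sup>+j. ennreal (r j) \<partial>count_space UNIV)"
proof -
  obtain a b c where update: "\<And>j. r' j = a j * r j + b j * r (j + 1) + c j * r (j - 1)"
    and nonneg: "\<And>j. a j \<ge> 0" "\<And>j. b j \<ge> 0" "\<And>j. c j \<ge> 0"
    and "\<And>k. a k + b (k - 1) + c (k + 1) = 1"
    using lax_friedrichs_step_three_point[OF assms(1-4)] by blast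
  then show "(\<integral>\<^sup>+j. ennreal (r' j) \<partial>count_space UNIV) = (\<integral>\<^sup>+j. ennreal (r j) \<partial>count_space UNIV)"
    using r_nonneg by (intro nn_integral_three_point_update)
  show "\<forall>j. r' j \<ge> 0"
    using nonneg r_nonneg by (simp add: update)
qed

lemma abs_set_integral_le_nn_integral_Ico:
  fixes g :: "real \<Rightarrow> real" and a b :: real
  assumes [measurable]: "g \<in> borel_measurable lborel"
  shows "ennreal \<bar>LINT x:{a..b}|lborel. g x\<bar> \<le> (\<integral>\<^sup>+x. ennreal \<bar>g x\<bar> * indicator {a..<b} x \<partial>lborel)"
proof -
  have "ennreal \<bar>LINT x:{a..b}|lborel. g x\<bar> \<le> (\<integral>\<^sup>+x. ennreal (norm (indicator {a..b} x *\<^sub>R g x)) \<partial>lborel)"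
  proof (cases "integrable lborel (\<lambda>x. indicator {a..b} x *\<^sub>R g x)")
    case True
    then show ?thesis using integral_norm_bound_ennreal[OF True]
      by (simp add: set_lebesgue_integral_def)
  next
    case False
    then show ?thesis by (simp add: set_lebesgue_integral_def not_integrable_integral_eq)
  qed
  also have "\<dots> = (\<integral>\<^sup>+x. ennreal \<bar>g x\<bar> * indicator {a..<b} x \<partial>lborel)"
    apply (rule nn_integral_cong_AE)
    using AE_lborel_singleton[of b]
    by eventually_elim (auto split: split_indicator simp: abs_mult)
  finally show ?thesis .
qed

lemma nn_integral_cell_averages_le:
  fixes g :: "real \<Rightarrow> real" and h :: real
  assumes [measurable]: "g \<in> borel_measurable lborel" and h: "h > 0"
  shows "(\<integral>\<^sup>+j. ennreal (h * \<bar>(1 / h) * (LINT x:{(real_of_int j - 1/2) * h .. (real_of_int j + 1/2) * h}|lborel. g x)\<bar>)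
      \<partial>count_space UNIV) \<le> (\<integral>\<^sup>+x. ennreal \<bar>g x\<bar> \<partial>lborel)"
proof -
  define I where "I j = {(real_of_int j - 1/2) * h ..< (real_of_int j + 1/2) * h}" for j :: int
  have key: "x \<in> I j \<longleftrightarrow> j = \<lfloor>x / h + 1/2\<rfloor>" for x j
  proof -
    have "x \<in> I j \<longleftrightarrow> real_of_int j \<le> x / h + 1/2 \<and> x / h + 1/2 < real_of_int j + 1"
      unfolding I_def using h by (auto simp: field_simps)
    also have "\<dots> \<longleftrightarrow> j = \<lfloor>x / h + 1/2\<rfloor>" by (metis floor_eq_iff)
    finally show ?thesis .
  qed
  have "(\<integral>\<^sup>+j. ennreal (h * \<bar>(1 / h) * (LINT x:{(real_of_int j - 1/2) * h .. (real_of_int j + 1/2) * h}|lborel. g x)\<bar>)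
      \<partial>count_space UNIV)
     \<le> (\<integral>\<^sup>+j. (\<integral>\<^sup>+x. ennreal \<bar>g x\<bar> * indicator (I j) x \<partial>lborel) \<partial>count_space UNIV)"
    using h unfolding I_def abs_mult
    by (intro nn_integral_mono) (simp add: abs_set_integral_le_nn_integral_Ico)
  also have "\<dots> = (\<integral>\<^sup>+x. (\<integral>\<^sup>+j. ennreal \<bar>g x\<bar> * indicator (I j) x \<partial>count_space UNIV) \<partial>lborel)"
    by (rule nn_integral_count_space_nn_integral[symmetric]) (auto simp: I_def)
  also have "\<dots> = (\<integral>\<^sup>+x. ennreal \<bar>g x\<bar> \<partial>lborel)"
  proof (rule nn_integral_cong)
    fix x
    have "(\<integral>\<^sup>+j. ennreal \<bar>g x\<bar> * indicator (I j) x \<partial>count_space UNIV)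
        = (\<integral>\<^sup>+j. ennreal \<bar>g x\<bar> * indicator {\<lfloor>x / h + 1/2\<rfloor>} j \<partial>count_space UNIV)"
      by (intro nn_integral_cong) (auto simp: key split: split_indicator)
    also have "\<dots> = ennreal \<bar>g x\<bar>" by simp
    finally show "(\<integral>\<^sup>+j. ennreal \<bar>g x\<bar> * indicator (I j) x \<partial>count_space UNIV) = ennreal \<bar>g x\<bar>" .
  qed
  finally show ?thesis .
qed

theorem lemma2p4:
  fixes f :: "real \<Rightarrow> real \<Rightarrow> real \<Rightarrow> real"
    and v eta rho0 :: "real \<Rightarrow> real"
    and C h tau :: real
    and theta :: "nat \<Rightarrow> int \<Rightarrow> real"
    and rho :: "nat \<Rightarrow> int \<Rightarrow> real"
  assumes C_pos: "C > 0"
    and f_C2: "C2_on ({0..} \<times> UNIV \<times> UNIV) (\<lambda>(t, x, r). f t x r)"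
    and f_rho_bdd: "\<exists>L. \<forall>t\<ge>0. \<forall>x r. \<bar>d_rho f t x r\<bar> \<le> L"
    and f_x_bdd: "\<forall>r. r \<noteq> 0 \<longrightarrow> (\<exists>K < C * \<bar>r\<bar>. \<forall>t\<ge>0. \<forall>x. \<bar>d_x f t x r\<bar> \<le> K)"
    and f_xx_bdd: "\<forall>r. r \<noteq> 0 \<longrightarrow> (\<exists>K < C * \<bar>r\<bar>. \<forall>t\<ge>0. \<forall>x. \<bar>d_xx f t x r\<bar> \<le> K)"
    and f_zero: "\<forall>t\<ge>0. \<forall>x. f t x 0 = 0"
    and v_C2: "C2_on UNIV v"
    and v_bdd: "\<exists>M. \<forall>u. \<bar>v u\<bar> \<le> M"
    and v'_bdd: "\<exists>M. \<forall>u. \<bar>deriv v u\<bar> \<le> M"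
    and eta_C2: "C2_on UNIV eta"
    and eta_bdd: "\<exists>M. \<forall>u. \<bar>eta u\<bar> \<le> M"
    and eta'_bdd: "\<exists>M. \<forall>u. \<bar>deriv eta u\<bar> \<le> M"
    and eta''_bdd: "\<exists>M. \<forall>u. \<bar>deriv (deriv eta) u\<bar> \<le> M"
    and rho0_meas: "rho0 \<in> borel_measurable lborel"
    and rho0_Linf: "\<exists>M. AE x in lborel. \<bar>rho0 x\<bar> \<le> M"
    and h_pos: "h > 0" and tau_pos: "tau > 0"
    and h_small: "h < 1 / C"
    and CFL: "(tau / h) * (1 + 2 * (SUP p \<in> {0::real..} \<times> (UNIV::real set) \<times> (UNIV::real set).
                 \<bar>d_rho f (fst p) (fst (snd p)) (snd (snd p))\<bar>)) * (SUP u. \<bar>v u\<bar>) \<le> 1 / 6"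
    and theta_range: "\<forall>n k. 0 \<le> theta n k \<and> theta n k \<le> 1"
    and rho_init: "\<forall>j. rho 0 j = (1 / h) *
          (LINT x:{(real_of_int j - 1/2) * h .. (real_of_int j + 1/2) * h}|lborel. rho0 x)"
    and rho_step: "\<forall>n j. rho (Suc n) j = rho n j - (tau / h) *
          (num_flux f v h tau n j
             (\<Sum>\<^sub>\<infinity>k. h * (theta n k * rho n k + (1 - theta n k) * rho n (k + 1))
                   * ((1 / h) * (LINT x:{real_of_int (j - k) * h .. real_of_int (j - k + 1) * h}|lborel. eta x)))
             (rho n j) (rho n (j + 1))
         - num_flux f v h tau n (j - 1)
             (\<Sum>\<^sub>\<infinity>k. h * (theta n k * rho n k + (1 - theta n k) * rho n (k + 1))
                   * ((1 / h) * (LINT x:{real_of_int (j - 1 - k) * h .. real_of_int (j - 1 - k + 1) * h}|lborel. eta x)))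
             (rho n (j - 1)) (rho n j))"
    and init_nonneg: "\<forall>j. rho 0 j \<ge> 0"
  shows "\<forall>n. (\<integral>\<^sup>+ j. ennreal (h * \<bar>rho n j\<bar>) \<partial>count_space UNIV)
              \<le> (\<integral>\<^sup>+ x. ennreal \<bar>rho0 x\<bar> \<partial>lborel)"
proof -
  define lam where "lam = tau / h"
  have lam_pos: "lam > 0" using h_pos tau_pos by (simp add: lam_def)
  define c where "c n j = (\<Sum>\<^sub>\<infinity>k. h * (theta n k * rho n k + (1 - theta n k) * rho n (k + 1))
      * ((1 / h) * (LINT x:{real_of_int (j - k) * h .. real_of_int (j - k + 1) * h}|lborel. eta x)))"
    for n j
  define G where "G n j s = f (real n * tau) ((real_of_int j + 1/2) * h) s / s * v (c n j)" for n j s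
  have step: "rho (Suc n) j = rho n j - lam * (num_flux f v h tau n j (c n j) (rho n j) (rho n (j + 1))
      - num_flux f v h tau n (j - 1) (c n (j - 1)) (rho n (j - 1)) (rho n j))" for n j
    using rho_step unfolding c_def lam_def by blast
  \<comment> \<open>Also at \<open>p = 0\<close> or \<open>q = 0\<close>, where \<open>s / 0 = 0\<close> and \<open>f\<close> vanishes.\<close>
  have flux: "num_flux f v h tau n j (c n j) p q = (G n j p * p + G n j q * q) / 2 - (q - p) / (6 * lam)"
    for n j p q
    using f_zero tau_pos unfolding num_flux_def G_def lam_def
    by (cases "p = 0"; cases "q = 0") (auto simp: distrib_right)
  have G_bound: "lam * \<bar>G n j s\<bar> \<le> 1 / 12" for n j s
    using lam_pos tau_pos CFL unfolding G_def lam_def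
    by (intro CFL_flux_coefficient_bound[OF f_C2 f_rho_bdd f_zero v_bdd]) auto
  have invariant: "(\<forall>j. rho n j \<ge> 0) \<and>
      (\<integral>\<^sup>+j. ennreal (rho n j) \<partial>count_space UNIV) = (\<integral>\<^sup>+j. ennreal (rho 0 j) \<partial>count_space UNIV)" for n
  proof (induction n)
    case (Suc n)
    then show ?case
      using lax_friedrichs_step_nonneg_mass[of "rho (Suc n)" "rho n", OF step flux lam_pos G_bound]
      by auto
  qed (use init_nonneg in auto)
  show ?thesis
  proof
    fix n
    have "(\<integral>\<^sup>+j. ennreal (h * \<bar>rho n j\<bar>) \<partial>count_space UNIV)
        = (\<integral>\<^sup>+j. ennreal (h * \<bar>rho 0 j\<bar>) \<partial>count_space UNIV)"
      using invariant[of n] invariant[of 0] h_pos by (simp add: ennreal_mult' nn_integral_cmult)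
    also have "\<dots> \<le> (\<integral>\<^sup>+x. ennreal \<bar>rho0 x\<bar> \<partial>lborel)"
      using nn_integral_cell_averages_le[OF rho0_meas h_pos] rho_init by simp
    finally show "(\<integral>\<^sup>+j. ennreal (h * \<bar>rho n j\<bar>) \<partial>count_space UNIV) \<le> (\<integral>\<^sup>+x. ennreal \<bar>rho0 x\<bar> \<partial>lborel)" .
  qed
qed

end
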